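(* There exists a list $I=(x_1,\ldots,x_n)$ of items with sizes in $(0,1]$ such that $$\mathbb{E}[\mathrm{BF}(I^\sigma)] = \frac{13}{10}\,\mathrm{OPT}(I),$$ where $\sigma$ is drawn uniformly at random from the set $\mathcal{S}_n$ of permutations of $[n]$.
   Context: Bin packing: items with sizes in $(0,1]$ are packed into unit-capacity bins (total size per bin at most $1$); $\mathrm{OPT}(I)$ is the minimum number of bins for list $I$. The online algorithm Best Fit (BF) processes the items in the given order and packs the current item into the fullest bin (largest current load) into which it fits, opening a new bin if it fits into no existing bin; items are never moved. $\mathrm{BF}(I)$ denotes the number of bins Best Fit uses on list $I$. For $\sigma\in\mathcal{S}_n$, $I^\sigma=(x_{\sigma(1)},\ldots,x_{\sigma(n)})$. *)

theory Defs
  imports "HOL-Analysis.Analysis" "HOL-Combinatorics.Permutations"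
begin

text \<open>The state is the list of current bin loads (one entry per open bin). Ties between equally full bins do not matter for
  the resulting multiset of loads, so we choose the first such bin.\<close>

definition bf_step :: "real list \<Rightarrow> real \<Rightarrow> real list" where
  "bf_step loads x =
     (let fits = filter (\<lambda>j. loads ! j + x \<le> 1) [0..<length loads] in
      if fits = [] then loads @ [x]
      else let m = Max ((\<lambda>j. loads ! j) ` set fits);
               j = hd (filter (\<lambda>j. loads ! j = m) fits)
           in loads[j := loads ! j + x])"

definition bf_loads :: "real list \<Rightarrow> real list" where
  "bf_loads xs = foldl bf_step [] xs"

definition BF :: "real list \<Rightarrow> nat" where
  "BF xs = length (bf_loads xs)"

definition feasible_packing :: "real list \<Rightarrow> nat \<Rightarrow> (nat \<Rightarrow> nat) \<Rightarrow> bool" where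
  "feasible_packing xs k f \<longleftrightarrow>
     (\<forall>i<length xs. f i < k) \<and>
     (\<forall>b<k. (\<Sum>i\<in>{i. i < length xs \<and> f i = b}. xs ! i) \<le> 1)"

definition OPT :: "real list \<Rightarrow> nat" where
  "OPT xs = (LEAST k. \<exists>f. feasible_packing xs k f)"

text \<open>I^\<sigma> = (x_{\<sigma>(1)},...,x_{\<sigma>(n)}), with 0-based indices.\<close>
definition permute_list_by :: "(nat \<Rightarrow> nat) \<Rightarrow> real list \<Rightarrow> real list" where
  "permute_list_by \<sigma> xs = map (\<lambda>i. xs ! \<sigma> i) [0..<length xs]"

definition expected_BF :: "real list \<Rightarrow> real" where
  "expected_BF xs =
     (\<Sum>\<sigma>\<in>{\<sigma>. \<sigma> permutes {..<length xs}}. real (BF (permute_list_by \<sigma> xs)))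
       / real (card {\<sigma>. \<sigma> permutes {..<length xs}})"

end

theory Submission
  imports Defs "HOL-Combinatorics.Multiset_Permutations"
begin

text \<open>Take three items of size 1/3 and two of size 5/12. Their total size 11/6 exceeds 1, and
  grouping equal items gives a packing into two bins, so OPT = 2. Best Fit uses two bins
  exactly when the first two items have equal size, and three otherwise: two different first
  items share a bin of load 3/4 that no later item fits into, and the remaining three items
  need two bins. The first two items agree with probability (3 \<cdot> 2 + 2 \<cdot> 1)/20 = 2/5, so
  the expected number of bins is 2 + 3/5 = 13/10 \<cdot> 2.\<close>

lemma permute_list_upt_nth:
  assumes "\<sigma> permutes {..<n}" "i < n"
  shows "permute_list \<sigma> [0..<n] ! i = \<sigma> i"
proof -
  have "\<sigma> i < n" using permutes_in_image[OF assms(1), of i] assms(2) by simp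
  then show ?thesis using assms by (simp add: permute_list_nth)
qed

lemma bij_betw_permute_list_upt:
  "bij_betw (\<lambda>\<sigma>. permute_list \<sigma> [0..<n]) {\<sigma>. \<sigma> permutes {..<n}} (permutations_of_set {..<n})"
proof (rule bij_betw_imageI)
  show "inj_on (\<lambda>\<sigma>. permute_list \<sigma> [0..<n]) {\<sigma>. \<sigma> permutes {..<n}}"
  proof (rule inj_onI, rule ext)
    fix \<sigma> \<tau> i
    assume \<sigma>: "\<sigma> \<in> {\<sigma>. \<sigma> permutes {..<n}}" and \<tau>: "\<tau> \<in> {\<sigma>. \<sigma> permutes {..<n}}"
      and eq: "permute_list \<sigma> [0..<n] = permute_list \<tau> [0..<n]"
    show "\<sigma> i = \<tau> i"
    proof (cases "i < n")
      case True
      then show ?thesis using \<sigma> \<tau> eq by (metis mem_Collect_eq permute_list_upt_nth)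
    next
      case False
      then show ?thesis using \<sigma> \<tau> by (simp add: permutes_not_in)
    qed
  qed
  show "(\<lambda>\<sigma>. permute_list \<sigma> [0..<n]) ` {\<sigma>. \<sigma> permutes {..<n}} = permutations_of_set {..<n}"
  proof (intro equalityI subsetI)
    fix L assume "L \<in> (\<lambda>\<sigma>. permute_list \<sigma> [0..<n]) ` {\<sigma>. \<sigma> permutes {..<n}}"
    then obtain \<sigma> where "\<sigma> permutes {..<n}" "L = permute_list \<sigma> [0..<n]" by blast
    then have "mset L = mset [0..<n]" by simp
    then show "L \<in> permutations_of_set {..<n}"
      by (metis atLeast_upt distinct_upt mset_eq_setD permutations_of_setI mset_eq_imp_distinct_iff)
  next
    fix L assume "L \<in> permutations_of_set {..<n}"
    then have "mset L = mset [0..<n]"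
      by (metis permutations_of_setD atLeast_upt distinct_upt set_eq_iff_mset_eq_distinct)
    then obtain \<sigma> where "\<sigma> permutes {..<n}" "permute_list \<sigma> [0..<n] = L"
      by (metis length_upt minus_nat.diff_0 mset_eq_permutation)
    then show "L \<in> (\<lambda>\<sigma>. permute_list \<sigma> [0..<n]) ` {\<sigma>. \<sigma> permutes {..<n}}" by blast
  qed
qed

lemma sum_permutes_permute_list:
  "(\<Sum>\<sigma>\<in>{\<sigma>. \<sigma> permutes {..<length xs}}. f (permute_list \<sigma> xs)) =
   (\<Sum>L\<in>permutations_of_set {..<length xs}. f (map ((!) xs) L))"
proof -
  have "permute_list \<sigma> xs = map ((!) xs) (permute_list \<sigma> [0..<length xs])"
    if "\<sigma> permutes {..<length xs}" for \<sigma>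
    using permute_list_map[of \<sigma> "[0..<length xs]" "(!) xs"] that by (simp add: map_nth)
  then show ?thesis
    by (simp add: sum.reindex_bij_betw[OF bij_betw_permute_list_upt, symmetric])
qed

lemma sum_permutations_of_set_upt:
  "(\<Sum>L\<in>permutations_of_set {..<n}. f L) = sum_list (map f (permutations_of_set_list [0..<n]))"
  using permutations_of_list[of "[0..<n]"]
  by (simp add: sum_list_distinct_conv_sum_set distinct_permutations_of_set_list atLeast_upt)

lemma packing_volume_bound:
  assumes "feasible_packing xs k f"
  shows "sum_list xs \<le> real k"
proof -
  have "sum_list xs = (\<Sum>i<length xs. xs ! i)"
    by (simp add: sum_list_sum_nth atLeast0LessThan)
  also have "\<dots> = (\<Sum>b<k. \<Sum>i\<in>{i. i < length xs \<and> f i = b}. xs ! i)"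
    using assms by (subst sum.group[symmetric, where g = f and T = "{..<k}"])
      (auto simp: feasible_packing_def)
  also have "\<dots> \<le> (\<Sum>b<k. 1)"
    using assms by (intro sum_mono) (simp add: feasible_packing_def)
  finally show ?thesis by simp
qed

lemma expected_BF_eq_sum_permutations_of_set:
  "expected_BF xs =
     (\<Sum>L\<in>permutations_of_set {..<length xs}. real (BF (map ((!) xs) L))) / fact (length xs)"
proof -
  have "permute_list_by = permute_list"
    by (intro ext) (simp add: permute_list_by_def permute_list_def)
  then show ?thesis
    by (simp add: expected_BF_def sum_permutes_permute_list[of "\<lambda>L. real (BF L)"]
        card_permutations)
qed

definition bf_witness :: "real list" where
  "bf_witness = [1/3, 1/3, 1/3, 5/12, 5/12]"

lemma BF_arrangements:
  "BF [1/3, 1/3, 1/3, 5/12, 5/12] = 2"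
  "BF [1/3, 1/3, 5/12, 1/3, 5/12] = 2"
  "BF [1/3, 1/3, 5/12, 5/12, 1/3] = 2"
  "BF [1/3, 5/12, 1/3, 1/3, 5/12] = 3"
  "BF [1/3, 5/12, 1/3, 5/12, 1/3] = 3"
  "BF [1/3, 5/12, 5/12, 1/3, 1/3] = 3"
  "BF [5/12, 1/3, 1/3, 1/3, 5/12] = 3"
  "BF [5/12, 1/3, 1/3, 5/12, 1/3] = 3"
  "BF [5/12, 1/3, 5/12, 1/3, 1/3] = 3"
  "BF [5/12, 5/12, 1/3, 1/3, 1/3] = 2"
  by (simp_all add: BF_def bf_loads_def bf_step_def upt_rec Let_def)

text \<open>Each of the 10 arrangements above arises from 12 index permutations:
  12 \<cdot> (4 \<cdot> 2 + 6 \<cdot> 3) = 312.\<close>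

lemma sum_BF_bf_witness:
  "(\<Sum>L\<in>permutations_of_set {..<length bf_witness}. real (BF (map ((!) bf_witness) L))) = 312"
  by (simp add: sum_permutations_of_set_upt bf_witness_def BF_arrangements
      permutations_of_set_list_def permutations_of_set_aux_list.simps upt_rec)

lemma feasible_packing_bf_witness:
  "feasible_packing bf_witness 2 (\<lambda>i. if i < 3 then 0 else 1)"
  unfolding feasible_packing_def
proof (intro conjI allI impI)
  fix b :: nat
  assume "b < 2"
  then have "{i. i < length bf_witness \<and> (if i < 3 then 0 else 1) = b} =
      (if b = 0 then {0, 1, 2} else {3, 4})"
    by (auto simp: bf_witness_def)
  then show "(\<Sum>i\<in>{i. i < length bf_witness \<and> (if i < 3 then 0 else 1) = b}. bf_witness ! i) \<le> 1"
    by (simp add: bf_witness_def)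
qed (simp add: bf_witness_def)

lemma OPT_bf_witness: "OPT bf_witness = 2"
  unfolding OPT_def
proof (rule Least_equality)
  show "\<exists>f. feasible_packing bf_witness 2 f"
    using feasible_packing_bf_witness by blast
next
  fix k
  assume "\<exists>f. feasible_packing bf_witness k f"
  then have "sum_list bf_witness \<le> k"
    using packing_volume_bound by blast
  then show "2 \<le> k"
    by (simp add: bf_witness_def)
qed

theorem lemma16:
  shows "\<exists>xs :: real list. xs \<noteq> [] \<and> (\<forall>x\<in>set xs. 0 < x \<and> x \<le> 1) \<and>
           expected_BF xs = 13 / 10 * real (OPT xs)"
proof (intro exI conjI)
  show "bf_witness \<noteq> []" and "\<forall>x\<in>set bf_witness. 0 < x \<and> x \<le> 1"
    by (simp_all add: bf_witness_def)
  show "expected_BF bf_witness = 13 / 10 * real (OPT bf_witness)"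
    unfolding expected_BF_eq_sum_permutations_of_set sum_BF_bf_witness OPT_bf_witness
    by (simp add: bf_witness_def fact_numeral)
qed

end
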